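(* Let $\kappa\ge1$, $n\ge1$ be integers and $0<\epsilon<1$. Let $\bar q\in\mathbb{R}^{2^\kappa}$ be given by $\bar q_0=0$ and $\bar q_i=\frac{1}{2^\kappa-1}$ for $1\le i\le2^\kappa-1$. Then $\lambda(n,\epsilon,\bar q)\le\lambda(n,\epsilon,q)$ for every $q\in\mathbb{R}^{2^\kappa}$ with $q_i\ge0$ for all $i$ and $\sum_{i=0}^{2^\kappa-1}q_i=1$.
   Context: $W=\mathbb{F}_2^\kappa$; $\nu(i)\in W$ is the binary expansion of $i\in\{0,\dots,2^\kappa-1\}$; vectors $q$ are indexed $q_0,\dots,q_{2^\kappa-1}$. For a subspace $S\subseteq W$, $\zeta(S,q)=\sum_{i:\nu(i)\in S}q_i$; $\Xi(W,\kappa-1)$ is the set of $(\kappa-1)$-dimensional subspaces of $W$. For real $q$ define $\lambda(n,\epsilon,q)=(2-\epsilon)^n2^{-\kappa}\Big(1+\sum_{S\in\Xi(W,\kappa-1)}\big(\tfrac{\epsilon}{2-\epsilon}\big)^{n(1-\zeta(S,q))}\Big)-1$ (for $q$ the column-distribution vector of a generator matrix, this is the $\chi^2$ divergence between $p_{MZ}$ and $p_Mp_Z$ for the coset code over a binary erasure channel with erasure probability $\epsilon$). *)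

theory Defs
  imports "HOL-Analysis.Analysis"
begin

text \<open>W = F_2^kappa is identified with {0..<2^kappa} via the binary expansion nu;
  vector addition in W corresponds to bitwise xor on naturals.\<close>

definition W :: "nat \<Rightarrow> nat set" where
  "W \<kappa> = {0..<2^\<kappa>}"

definition is_subspace :: "nat \<Rightarrow> nat set \<Rightarrow> bool" where
  "is_subspace \<kappa> S \<longleftrightarrow> S \<subseteq> W \<kappa> \<and> 0 \<in> S \<and> (\<forall>x\<in>S. \<forall>y\<in>S. xor x y \<in> S)"

text \<open>A subspace of an F_2-vector space has dimension d iff it has 2^d elements.\<close>
definition Xi :: "nat \<Rightarrow> nat \<Rightarrow> nat set set" where
  "Xi \<kappa> d = {S. is_subspace \<kappa> S \<and> card S = 2^d}"

definition zeta :: "nat set \<Rightarrow> (nat \<Rightarrow> real) \<Rightarrow> real" where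
  "zeta S q = (\<Sum>i\<in>S. q i)"

definition lam :: "nat \<Rightarrow> nat \<Rightarrow> real \<Rightarrow> (nat \<Rightarrow> real) \<Rightarrow> real" where
  "lam \<kappa> n \<epsilon> q = (2 - \<epsilon>)^n * 2 powr (- real \<kappa>) *
     (1 + (\<Sum>S\<in>Xi \<kappa> (\<kappa> - 1). (\<epsilon> / (2 - \<epsilon>)) powr (real n * (1 - zeta S q)))) - 1"

definition qbar :: "nat \<Rightarrow> nat \<Rightarrow> real" where
  "qbar \<kappa> i = (if i = 0 then 0 else 1 / (2^\<kappa> - 1))"

end

theory Submission
  imports Defs
begin

text \<open>The linear automorphisms of W act transitively on its nonzero vectors, so every nonzero
  vector lies in the same number M of the N hyperplanes S. Double counting then gives
  \<open>\<Sum>\<^sub>S \<zeta>(S,q) = q\<^sub>0 N + (1 - q\<^sub>0) M\<close>. For qbar every \<open>\<zeta>(S,qbar)\<close> equals the same constant c,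
  whence \<open>M = N c\<close> and \<open>\<Sum>\<^sub>S \<zeta>(S,q) \<ge> N c\<close> for every distribution q. As \<open>x \<mapsto> r\<^bsup>n(1-x)\<^esup>\<close> is
  convex, its tangent at c bounds \<open>\<Sum>\<^sub>S r\<^bsup>n(1-\<zeta>(S,q))\<^esup>\<close> from below by \<open>N r\<^bsup>n(1-c)\<^esup>\<close>, the value
  attained at qbar.\<close>

definition transvection :: "nat \<Rightarrow> nat \<Rightarrow> nat \<Rightarrow> nat" where
  "transvection k v x = xor x (if bit x k then v else 0)"

lemma transvection_xor: "transvection k v (xor x y) = xor (transvection k v x) (transvection k v y)"
  by (rule bit_eqI) (auto simp: transvection_def bit_xor_iff)

lemma transvection_transvection: "\<not> bit v k \<Longrightarrow> transvection k v (transvection k v x) = x"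
  by (rule bit_eqI) (auto simp: transvection_def bit_xor_iff)

lemma xor_in_W: "x \<in> W \<kappa> \<Longrightarrow> y \<in> W \<kappa> \<Longrightarrow> xor x y \<in> W \<kappa>"
  unfolding W_def by (metis atLeastLessThan_iff take_bit_nat_eq_self_iff take_bit_xor zero_le)

lemma or_in_W: "x \<in> W \<kappa> \<Longrightarrow> y \<in> W \<kappa> \<Longrightarrow> or x y \<in> W \<kappa>"
  unfolding W_def by (metis atLeastLessThan_iff take_bit_nat_eq_self_iff take_bit_or zero_le)

lemma transvection_in_W: "x \<in> W \<kappa> \<Longrightarrow> v \<in> W \<kappa> \<Longrightarrow> transvection k v x \<in> W \<kappa>"
  by (simp add: transvection_def xor_in_W)

lemma pow2_in_W_if_bit: "x \<in> W \<kappa> \<Longrightarrow> bit x k \<Longrightarrow> (2::nat) ^ k \<in> W \<kappa>"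
  unfolding W_def
  by (metis atLeastLessThan_iff bit_take_bit_iff take_bit_nat_eq_self_iff zero_le
      power_strict_increasing_iff one_less_numeral_iff semiring_norm(76))

lemma finite_Xi: "finite (Xi \<kappa> d)"
proof (rule finite_subset)
  show "Xi \<kappa> d \<subseteq> Pow (W \<kappa>)" by (auto simp: Xi_def is_subspace_def)
qed (simp add: W_def)

lemma image_in_Xi:
  assumes maps: "\<forall>x\<in>W \<kappa>. \<sigma> x \<in> W \<kappa>" and inj: "inj_on \<sigma> (W \<kappa>)"
    and additive: "\<forall>x\<in>W \<kappa>. \<forall>y\<in>W \<kappa>. \<sigma> (xor x y) = xor (\<sigma> x) (\<sigma> y)"
    and S: "S \<in> Xi \<kappa> d"
  shows "\<sigma> ` S \<in> Xi \<kappa> d"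
proof -
  have S_sub: "S \<subseteq> W \<kappa>" and "0 \<in> S" and S_xor: "\<forall>x\<in>S. \<forall>y\<in>S. xor x y \<in> S"
    and "card S = 2 ^ d"
    using S by (auto simp: Xi_def is_subspace_def)
  have "\<sigma> 0 = 0"
    using additive by (metis xor_self_eq \<open>0 \<in> S\<close> S_sub subsetD)
  then have "0 \<in> \<sigma> ` S" using \<open>0 \<in> S\<close> by (metis image_eqI)
  moreover have "card (\<sigma> ` S) = 2 ^ d"
    using \<open>card S = 2 ^ d\<close> inj_on_subset[OF inj S_sub] by (simp add: card_image)
  moreover have "xor (\<sigma> a) (\<sigma> b) \<in> \<sigma> ` S" if "a \<in> S" "b \<in> S" for a b
    using that S_xor S_sub additive by (metis image_eqI subsetD)
  ultimately show ?thesis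
    using S_sub maps by (auto simp: Xi_def is_subspace_def)
qed

lemma card_subspaces_containing_involution:
  assumes maps: "\<forall>x\<in>W \<kappa>. \<sigma> x \<in> W \<kappa>" and involutive: "\<forall>x\<in>W \<kappa>. \<sigma> (\<sigma> x) = x"
    and additive: "\<forall>x\<in>W \<kappa>. \<forall>y\<in>W \<kappa>. \<sigma> (xor x y) = xor (\<sigma> x) (\<sigma> y)"
    and i: "i \<in> W \<kappa>"
  shows "card {S \<in> Xi \<kappa> d. i \<in> S} = card {S \<in> Xi \<kappa> d. \<sigma> i \<in> S}"
proof (rule bij_betw_same_card[of "image \<sigma>"], rule bij_betw_byWitness[where f' = "image \<sigma>"])
  have inj: "inj_on \<sigma> (W \<kappa>)" using involutive by (metis inj_on_inverseI)
  have involutive_image: "\<sigma> ` \<sigma> ` S = S" if "S \<in> Xi \<kappa> d" for S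
  proof -
    have "S \<subseteq> W \<kappa>" using that by (auto simp: Xi_def is_subspace_def)
    then show ?thesis using involutive by (force simp: image_image)
  qed
  show "\<forall>S\<in>{S \<in> Xi \<kappa> d. i \<in> S}. \<sigma> ` \<sigma> ` S = S"
    and "\<forall>S\<in>{S \<in> Xi \<kappa> d. \<sigma> i \<in> S}. \<sigma> ` \<sigma> ` S = S"
    using involutive_image by auto
  show "image \<sigma> ` {S \<in> Xi \<kappa> d. i \<in> S} \<subseteq> {S \<in> Xi \<kappa> d. \<sigma> i \<in> S}"
    using image_in_Xi[OF maps inj additive] by auto
  show "image \<sigma> ` {S \<in> Xi \<kappa> d. \<sigma> i \<in> S} \<subseteq> {S \<in> Xi \<kappa> d. i \<in> S}"
    using image_in_Xi[OF maps inj additive] involutive i by force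
qed

lemma card_subspaces_containing_common_bit:
  assumes "i \<in> W \<kappa>" "j \<in> W \<kappa>" "bit i k" "bit j k"
  shows "card {S \<in> Xi \<kappa> d. i \<in> S} = card {S \<in> Xi \<kappa> d. j \<in> S}"
proof -
  define v where "v = xor i j"
  have "transvection k v i = j"
    by (rule bit_eqI) (use assms(3) in \<open>auto simp: transvection_def v_def bit_xor_iff\<close>)
  moreover have "card {S \<in> Xi \<kappa> d. i \<in> S} = card {S \<in> Xi \<kappa> d. transvection k v i \<in> S}"
  proof (rule card_subspaces_containing_involution)
    have "v \<in> W \<kappa>" "\<not> bit v k" using assms by (auto simp: v_def xor_in_W bit_xor_iff)
    then show "\<forall>x\<in>W \<kappa>. transvection k v x \<in> W \<kappa>"
      and "\<forall>x\<in>W \<kappa>. transvection k v (transvection k v x) = x"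
      by (simp_all add: transvection_in_W transvection_transvection)
  qed (simp_all add: transvection_xor assms(1))
  ultimately show ?thesis by simp
qed

lemma card_subspaces_containing_eq:
  assumes i: "i \<in> W \<kappa> - {0}" and j: "j \<in> W \<kappa> - {0}"
  shows "card {S \<in> Xi \<kappa> d. i \<in> S} = card {S \<in> Xi \<kappa> d. j \<in> S}"
proof -
  have "\<exists>k. bit x k" if "x \<noteq> 0" for x :: nat
  proof (rule ccontr)
    assume "\<nexists>k. bit x k"
    then have "x = 0" by (intro bit_eqI) simp
    with that show False by simp
  qed
  then obtain k l where k: "bit i k" and l: "bit j l" using i j by blast
  define w where "w = or ((2::nat) ^ k) (2 ^ l)"
  have w: "w \<in> W \<kappa>"
    unfolding w_def using i j k l by (auto intro: or_in_W pow2_in_W_if_bit)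
  have "card {S \<in> Xi \<kappa> d. i \<in> S} = card {S \<in> Xi \<kappa> d. w \<in> S}"
    using i w k by (intro card_subspaces_containing_common_bit) (auto simp: w_def bit_or_iff bit_exp_iff)
  also have "\<dots> = card {S \<in> Xi \<kappa> d. j \<in> S}"
    using j w l by (intro card_subspaces_containing_common_bit) (auto simp: w_def bit_or_iff bit_exp_iff)
  finally show ?thesis .
qed

lemma sum_sum_subsets_eq_sum_card:
  fixes g :: "'a \<Rightarrow> real"
  assumes "finite X" "finite A" "\<forall>S\<in>X. S \<subseteq> A"
  shows "(\<Sum>S\<in>X. \<Sum>i\<in>S. g i) = (\<Sum>i\<in>A. g i * card {S \<in> X. i \<in> S})"
proof -
  have "(\<Sum>S\<in>X. \<Sum>i\<in>S. g i) = (\<Sum>S\<in>X. \<Sum>i\<in>A. if i \<in> S then g i else 0)"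
    using assms(3) by (intro sum.cong[OF refl]) (simp add: sum.If_cases[OF assms(2)] Int_absorb1)
  also have "\<dots> = (\<Sum>i\<in>A. \<Sum>S\<in>X. if i \<in> S then g i else 0)"
    by (rule sum.swap)
  also have "\<dots> = (\<Sum>i\<in>A. g i * card {S \<in> X. i \<in> S})"
    using assms(1) by (intro sum.cong[OF refl]) (simp add: sum.If_cases Int_def)
  finally show ?thesis .
qed

lemma sum_zeta_subspaces:
  assumes q: "(\<Sum>i\<in>W \<kappa>. q i) = 1" and j: "j \<in> W \<kappa> - {0}"
  shows "(\<Sum>S\<in>Xi \<kappa> d. zeta S q)
    = q 0 * card (Xi \<kappa> d) + (1 - q 0) * card {S \<in> Xi \<kappa> d. j \<in> S}"
proof -
  let ?m = "\<lambda>i. card {S \<in> Xi \<kappa> d. i \<in> S}"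
  have fin: "finite (W \<kappa>)" and zero: "0 \<in> W \<kappa>" by (simp_all add: W_def)
  have "?m 0 = card (Xi \<kappa> d)"
    by (rule arg_cong[where f = card]) (auto simp: Xi_def is_subspace_def)
  have "(\<Sum>S\<in>Xi \<kappa> d. zeta S q) = (\<Sum>i\<in>W \<kappa>. q i * ?m i)"
    unfolding zeta_def
    by (rule sum_sum_subsets_eq_sum_card) (auto simp: finite_Xi fin Xi_def is_subspace_def)
  also have "\<dots> = q 0 * ?m 0 + (\<Sum>i\<in>W \<kappa> - {0}. q i) * ?m j"
    using card_subspaces_containing_eq[OF _ j]
    by (simp add: sum.remove[OF fin zero] sum_distrib_right)
  also have "(\<Sum>i\<in>W \<kappa> - {0}. q i) = 1 - q 0"
    using q by (simp add: sum.remove[OF fin zero])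
  finally show ?thesis
    using \<open>?m 0 = card (Xi \<kappa> d)\<close> by simp
qed

lemma sum_qbar:
  assumes "\<kappa> \<ge> 1"
  shows "(\<Sum>i\<in>W \<kappa>. qbar \<kappa> i) = 1"
proof -
  have "(1::real) < 2 ^ \<kappa>" using assms by (intro one_less_power) auto
  have "finite (W \<kappa>)" "0 \<in> W \<kappa>" by (simp_all add: W_def)
  then have "(\<Sum>i\<in>W \<kappa>. qbar \<kappa> i) = (\<Sum>i\<in>W \<kappa> - {0}. 1 / (2 ^ \<kappa> - 1))"
    by (simp add: sum.remove qbar_def)
  also have "\<dots> = (2 ^ \<kappa> - 1) / (2 ^ \<kappa> - 1)"
    by (simp add: W_def of_nat_diff)
  finally show ?thesis using \<open>1 < 2 ^ \<kappa>\<close> by simp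
qed

lemma zeta_qbar:
  assumes S: "S \<in> Xi \<kappa> d"
  shows "zeta S (qbar \<kappa>) = (2 ^ d - 1) / (2 ^ \<kappa> - 1)"
proof -
  have "finite S" "0 \<in> S" "card S = 2 ^ d"
    using S finite_subset[of S "W \<kappa>"] by (auto simp: Xi_def is_subspace_def W_def)
  then show ?thesis
    by (simp add: zeta_def sum.remove[of S 0] qbar_def card_Diff_singleton of_nat_diff)
qed

lemma sum_zeta_subspaces_ge:
  assumes "1 \<le> \<kappa>" "d \<le> \<kappa>" and q: "(\<Sum>i\<in>W \<kappa>. q i) = 1" "0 \<le> q 0"
  shows "card (Xi \<kappa> d) * ((2 ^ d - 1) / (2 ^ \<kappa> - 1)) \<le> (\<Sum>S\<in>Xi \<kappa> d. zeta S q)"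
proof -
  let ?N = "card (Xi \<kappa> d)" and ?M = "card {S \<in> Xi \<kappa> d. 1 \<in> S}"
  let ?c = "((2 ^ d - 1) / (2 ^ \<kappa> - 1)) :: real"
  have "(1::nat) < 2 ^ \<kappa>" using assms(1) by (intro one_less_power) auto
  then have one: "1 \<in> W \<kappa> - {0}" by (simp add: W_def)
  have "?N * ?c = (\<Sum>S\<in>Xi \<kappa> d. zeta S (qbar \<kappa>))"
    by (simp add: zeta_qbar)
  also have "\<dots> = ?M"
    using sum_zeta_subspaces[OF sum_qbar[OF assms(1)] one] by (simp add: qbar_def[of \<kappa> 0])
  finally have "?N * ?c = ?M" .
  moreover have "(\<Sum>S\<in>Xi \<kappa> d. zeta S q) = q 0 * ?N + (1 - q 0) * ?M"
    using sum_zeta_subspaces[OF q(1) one] .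
  ultimately have "(\<Sum>S\<in>Xi \<kappa> d. zeta S q) - ?N * ?c = q 0 * (?N * (1 - ?c))"
    by (simp add: algebra_simps)
  moreover have "(1::real) < 2 ^ \<kappa>" "(2::real) ^ d \<le> 2 ^ \<kappa>"
    using assms(1,2) by (auto intro: one_less_power power_increasing)
  then have "0 \<le> q 0 * (?N * (1 - ?c))"
    using q(2) by (simp add: divide_le_eq_1)
  ultimately show ?thesis by linarith
qed

lemma powr_ge_tangent:
  fixes r a x c :: real
  assumes "0 < r"
  shows "r powr (a * (1 - c)) * (1 - ln r * a * (x - c)) \<le> r powr (a * (1 - x))"
proof -
  have "r powr (a * (1 - x)) = r powr (a * (1 - c)) * exp (- ln r * a * (x - c))"
    using assms by (simp add: powr_def exp_add[symmetric] algebra_simps)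
  moreover have "1 - ln r * a * (x - c) \<le> exp (- ln r * a * (x - c))"
    using exp_ge_add_one_self[of "- ln r * a * (x - c)"] by simp
  ultimately show ?thesis by (simp add: mult_left_mono)
qed

lemma sum_powr_ge_of_sum_ge:
  fixes z :: "'a \<Rightarrow> real" and c :: real
  assumes "0 < r" "r < 1" "0 \<le> a" and mean: "card X * c \<le> (\<Sum>S\<in>X. z S)"
  shows "card X * r powr (a * (1 - c)) \<le> (\<Sum>S\<in>X. r powr (a * (1 - z S)))"
proof -
  define f where "f = r powr (a * (1 - c))"
  define L where "L = - ln r * a"
  have "0 \<le> L" using assms(1-3) by (simp add: L_def mult_nonpos_nonneg)
  have "card X * f \<le> card X * f + f * L * ((\<Sum>S\<in>X. z S) - card X * c)"
    using mean \<open>0 \<le> L\<close> by (simp add: f_def)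
  also have "\<dots> = (\<Sum>S\<in>X. f * (1 + L * (z S - c)))"
    by (simp add: sum.distrib sum_subtractf sum_distrib_left algebra_simps)
  also have "\<dots> \<le> (\<Sum>S\<in>X. r powr (a * (1 - z S)))"
    using powr_ge_tangent[OF assms(1)] by (intro sum_mono) (simp add: f_def L_def)
  finally show ?thesis by (simp add: f_def)
qed

lemma lam_mono:
  assumes "\<epsilon> < 2"
    and "(\<Sum>S\<in>Xi \<kappa> (\<kappa> - 1). (\<epsilon> / (2 - \<epsilon>)) powr (real n * (1 - zeta S p)))
      \<le> (\<Sum>S\<in>Xi \<kappa> (\<kappa> - 1). (\<epsilon> / (2 - \<epsilon>)) powr (real n * (1 - zeta S q)))"
  shows "lam \<kappa> n \<epsilon> p \<le> lam \<kappa> n \<epsilon> q"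
  using assms unfolding lam_def by (simp add: mult_left_mono)

theorem theorem7:
  fixes \<kappa> n :: nat and \<epsilon> :: real and q :: "nat \<Rightarrow> real"
  assumes "\<kappa> \<ge> 1" and "n \<ge> 1" and "0 < \<epsilon>" and "\<epsilon> < 1"
    and "\<forall>i<2^\<kappa>. q i \<ge> 0"
    and "(\<Sum>i<2^\<kappa>. q i) = 1"
  shows "lam \<kappa> n \<epsilon> (qbar \<kappa>) \<le> lam \<kappa> n \<epsilon> q"
proof (rule lam_mono)
  define c :: real where "c = (2 ^ (\<kappa> - 1) - 1) / (2 ^ \<kappa> - 1)"
  have "(\<Sum>i\<in>W \<kappa>. q i) = 1" "0 \<le> q 0"
    using assms(5,6) by (simp_all add: W_def atLeast0LessThan)
  then have "card (Xi \<kappa> (\<kappa> - 1)) * c \<le> (\<Sum>S\<in>Xi \<kappa> (\<kappa> - 1). zeta S q)"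
    unfolding c_def using assms(1) by (intro sum_zeta_subspaces_ge) auto
  moreover have "0 < \<epsilon> / (2 - \<epsilon>)" "\<epsilon> / (2 - \<epsilon>) < 1"
    using assms(3,4) by (simp_all add: field_simps)
  ultimately show "(\<Sum>S\<in>Xi \<kappa> (\<kappa> - 1). (\<epsilon> / (2 - \<epsilon>)) powr (real n * (1 - zeta S (qbar \<kappa>))))
      \<le> (\<Sum>S\<in>Xi \<kappa> (\<kappa> - 1). (\<epsilon> / (2 - \<epsilon>)) powr (real n * (1 - zeta S q)))"
    using sum_powr_ge_of_sum_ge[of "\<epsilon> / (2 - \<epsilon>)" "real n" "Xi \<kappa> (\<kappa> - 1)" c]
    by (simp add: zeta_qbar c_def)
qed (use assms(4) in simp)

end
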